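(* The family $\{X\in\mathcal{X}_2:X\not\subseteq1+8\mathbb{N}_0\}$ coincides with the set of minimal elements of the poset $\mathcal{X}_2$, and the set $\{X\in\mathcal{X}_2:X\subseteq1+8\mathbb{N}_0\}$ is linearly ordered and coincides with $\{1+2^n\mathbb{N}_0:n\ge3\}$.
   Context: $\mathbb{N}=\{1,2,\dots\}$, $\mathbb{N}_0=\{0\}\cup\mathbb{N}$, $x^{\mathbb{N}}=\{x^k:k\in\mathbb{N}\}$. $\mathcal{X}_2=\{\overline{a^{\mathbb{N}}}:a\in\mathbb{N}\setminus2\mathbb{N},\ a\ne1\}$, closures taken in the $2$-adic topology on $\mathbb{N}\setminus2\mathbb{N}$ (generated by the sets $x+2^m\mathbb{N}_0$, $x,m\in\mathbb{N}$), partially ordered by reverse inclusion: $X\le Y$ iff $Y\subseteq X$. *)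

theory Defs
  imports "HOL-Analysis.Analysis"
begin

definition prog :: "nat \<Rightarrow> nat \<Rightarrow> nat set" where
  "prog x m = {x + 2^m * k | k. True}"

definition two_adic_top :: "nat topology" where
  "two_adic_top = topology_generated_by {prog x m \<inter> {n. odd n} | x m. x \<ge> 1 \<and> m \<ge> 1}"

definition powers :: "nat \<Rightarrow> nat set" where
  "powers a = {a ^ k | k. k \<ge> 1}"

definition X2 :: "nat set set" where
  "X2 = {two_adic_top closure_of (powers a) | a. odd a \<and> a \<noteq> 1}"

end

theory Submission
  imports Defs "HOL-Number_Theory.Number_Theory"
begin

text \<open>For odd \<open>a \<noteq> 1\<close> write \<open>a^p = 1 + 2^w u\<close> with \<open>u\<close> odd and \<open>w \<ge> 2\<close>, taking \<open>p = 1\<close>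
  if \<open>a \<equiv> 1 (mod 4)\<close> and \<open>p = 2\<close> otherwise. Since \<open>(a^p)^(2^j) = 1 + 2^(w+j) q\<close> with \<open>q\<close> odd,
  a residue of a power of \<open>a\<close> modulo \<open>2^w\<close> lifts to residues of powers of \<open>a\<close> modulo every
  higher power of 2, so the closure of \<open>a^\<nat>\<close> consists of the odd numbers congruent modulo
  \<open>2^w\<close> to a power of \<open>a\<close>. This is \<open>1 + 2^w \<nat>\<^sub>0\<close> if \<open>a \<equiv> 1 (mod 4)\<close>, and
  \<open>(1 + 2^w \<nat>\<^sub>0) \<union> (a + 2^w \<nat>\<^sub>0)\<close> with \<open>w \<ge> 3\<close> otherwise. A closure of the second kind
  is the closure of each of its elements \<open>\<equiv> 3 (mod 4)\<close>, hence maximal for inclusion (that is,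
  minimal in \<open>X2\<close>); so is \<open>1 + 4 \<nat>\<^sub>0\<close>, because no other member contains 5; the remaining members \<open>1 + 2^n \<nat>\<^sub>0\<close>, \<open>n \<ge> 3\<close>, form a
  chain.\<close>

section \<open>Progressions modulo powers of two\<close>

lemma mem_prog_iff: "y \<in> prog x m \<longleftrightarrow> x \<le> y \<and> [y = x] (mod 2^m)"
  unfolding prog_def by (auto simp: cong_le_nat)

lemma cong_pow2_mono: "[x = y] (mod 2^n) \<Longrightarrow> k \<le> n \<Longrightarrow> [x = y] (mod (2::nat)^k)"
  using cong_dvd_modulus_nat le_imp_power_dvd by blast

lemma prog_antimono: "n \<le> m \<Longrightarrow> prog x m \<subseteq> prog x n"
  by (auto simp: mem_prog_iff intro: cong_pow2_mono)

lemma prog_subset_prog: "y \<in> prog x m \<Longrightarrow> prog y m \<subseteq> prog x m"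
  by (auto simp: mem_prog_iff intro: cong_trans)

lemma prog_subset_odd:
  assumes "odd x" "1 \<le> m"
  shows "prog x m \<subseteq> {y. odd y}"
proof
  fix y assume "y \<in> prog x m"
  then have "[y = x] (mod 2^1)" using assms(2) cong_pow2_mono[of y x m 1] by (simp add: mem_prog_iff)
  then show "y \<in> {y. odd y}" using assms(1) by (simp add: cong_def odd_iff_mod_2_eq_one)
qed

lemma one_plus_cong_one: "[1 + 2^w * u = 1] (mod (2::nat)^w)"
  using cong_add[OF cong_refl[of 1] cong_0_iff[THEN iffD2, of "2^w" "2^w * u"]] by simp

lemma pow2_times_odd_decomposition:
  fixes n :: nat
  assumes "n \<noteq> 0" "2^k dvd n"
  obtains v u where "n = 2^v * u" "odd u" "k \<le> v"
proof -
  obtain u where "n = 2^multiplicity 2 n * u" "odd u"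
    using multiplicity_decompose'[of n 2] assms(1) by auto
  moreover have "k \<le> multiplicity 2 n" using power_dvd_iff_le_multiplicity[of n 2 k] assms by simp
  ultimately show ?thesis using that by blast
qed

section \<open>The 2-adic topology\<close>

lemma topspace_two_adic_top: "topspace two_adic_top = {x. odd x}"
proof -
  have "\<Union>{prog x m \<inter> {n. odd n} | x m. x \<ge> 1 \<and> m \<ge> 1} = {x. odd x}"
  proof (intro equalityI subsetI)
    fix y :: nat assume "y \<in> {x. odd x}"
    then have "y \<in> prog y 1 \<inter> {n. odd n}" "1 \<le> y" using odd_pos by (auto simp: mem_prog_iff Suc_le_eq)
    then show "y \<in> \<Union>{prog x m \<inter> {n. odd n} | x m. x \<ge> 1 \<and> m \<ge> 1}" by blast
  qed auto
  then show ?thesis unfolding two_adic_top_def by simp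
qed

lemma openin_two_adic_top_prog:
  assumes "odd x" "1 \<le> m"
  shows "openin two_adic_top (prog x m)"
proof -
  have "prog x m = prog x m \<inter> {n. odd n}" using prog_subset_odd[OF assms] by blast
  moreover have "1 \<le> x" using assms(1) odd_pos by (simp add: Suc_le_eq)
  ultimately have "prog x m \<in> {prog x m \<inter> {n. odd n} | x m. x \<ge> 1 \<and> m \<ge> 1}"
    using assms(2) by blast
  then show ?thesis unfolding two_adic_top_def by (rule topology_generated_by_Basis)
qed

lemma openin_two_adic_top_imp_prog_subset:
  assumes "openin two_adic_top T" "x \<in> T"
  shows "\<exists>m\<ge>1. prog x m \<subseteq> T"
proof -
  have "odd x" using openin_subset[OF assms(1)] assms(2) by (auto simp: topspace_two_adic_top)
  have "generate_topology_on {prog x m \<inter> {n. odd n} | x m. x \<ge> 1 \<and> m \<ge> 1} T"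
    using assms(1) by (simp add: two_adic_top_def openin_topology_generated_by_iff)
  then show ?thesis using assms(2) \<open>odd x\<close>
  proof (induction arbitrary: x)
    case Empty
    then show ?case by simp
  next
    case (Int S T)
    then obtain m1 m2 where "1 \<le> m1" "prog x m1 \<subseteq> S" "prog x m2 \<subseteq> T" by blast
    then show ?case using prog_antimono[of m1 "max m1 m2" x] prog_antimono[of m2 "max m1 m2" x]
      by (intro exI[of _ "max m1 m2"]) auto
  next
    case (UN K)
    then show ?case by blast
  next
    case (Basis S)
    then obtain x0 m where S: "S = prog x0 m \<inter> {n. odd n}" "1 \<le> m" by blast
    then have "prog x m \<subseteq> S"
      using Basis.prems prog_subset_prog[of x x0 m] prog_subset_odd[of x m] by auto
    then show ?case using S(2) by blast
  qed
qed

lemma in_two_adic_closure_iff: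
  "x \<in> two_adic_top closure_of S \<longleftrightarrow> odd x \<and> (\<forall>m\<ge>1. \<exists>y\<in>S. y \<in> prog x m)"
proof
  assume x: "x \<in> two_adic_top closure_of S"
  then have "odd x" by (simp add: in_closure_of topspace_two_adic_top)
  moreover have "\<exists>y\<in>S. y \<in> prog x m" if "1 \<le> m" for m
  proof -
    have "x \<in> prog x m" by (simp add: mem_prog_iff)
    then show ?thesis using x openin_two_adic_top_prog[OF \<open>odd x\<close> that] unfolding in_closure_of by blast
  qed
  ultimately show "odd x \<and> (\<forall>m\<ge>1. \<exists>y\<in>S. y \<in> prog x m)" by blast
next
  assume x: "odd x \<and> (\<forall>m\<ge>1. \<exists>y\<in>S. y \<in> prog x m)"
  have "\<exists>y\<in>S. y \<in> T" if "openin two_adic_top T" "x \<in> T" for T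
    using x openin_two_adic_top_imp_prog_subset[OF that] by blast
  then show "x \<in> two_adic_top closure_of S" using x by (auto simp: in_closure_of topspace_two_adic_top)
qed

section \<open>Closures of sets of powers\<close>

lemma in_two_adic_closure_powers_iff:
  assumes "odd a" "a \<noteq> 1"
  shows "x \<in> two_adic_top closure_of powers a \<longleftrightarrow> odd x \<and> (\<forall>m. \<exists>k. [a^k = x] (mod 2^m))"
proof
  assume x: "x \<in> two_adic_top closure_of powers a"
  have "\<exists>k. [a^k = x] (mod 2^m)" for m
  proof -
    obtain y where y: "y \<in> powers a" "y \<in> prog x (Suc m)"
      using x by (auto simp: in_two_adic_closure_iff)
    then have "y \<in> prog x m" using prog_antimono[of m "Suc m" x] by auto
    then show ?thesis using y(1) by (auto simp: powers_def mem_prog_iff)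
  qed
  then show "odd x \<and> (\<forall>m. \<exists>k. [a^k = x] (mod 2^m))" using x by (simp add: in_two_adic_closure_iff)
next
  assume x: "odd x \<and> (\<forall>m. \<exists>k. [a^k = x] (mod 2^m))"
  have "\<exists>y\<in>powers a. y \<in> prog x m" for m
  proof -
    obtain k where k: "[a^k = x] (mod 2^m)" using x by blast
    txt \<open>Shifting the exponent by multiples of \<open>totient (2^m)\<close> keeps the residue and makes
      the power exceed \<open>x\<close>.\<close>
    define t where "t = totient (2^m)"
    define K where "K = k + x * t"
    have "[a^t = 1] (mod 2^m)" unfolding t_def using \<open>odd a\<close> by (intro euler_theorem) simp
    then have "[a^k * (a^t)^x = a^k * 1^x] (mod 2^m)" by (intro cong_mult cong_pow cong_refl)
    then have cong: "[a^K = x] (mod 2^m)"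
      using k by (simp add: K_def power_add power_mult mult.commute[of x] cong_trans)
    have "1 \<le> t" by (simp add: t_def Suc_le_eq)
    then have "x \<le> K" unfolding K_def by (metis mult_le_mono2 mult.right_neutral trans_le_add2)
    also have "K < 2^K" by simp
    also have "2^K \<le> a^K" using assms odd_pos by (intro power_mono) presburger+
    finally have "x \<le> a^K" by simp
    moreover have "1 \<le> K" using \<open>x \<le> K\<close> x odd_pos by fastforce
    ultimately show ?thesis using cong by (auto simp: powers_def mem_prog_iff)
  qed
  then show "x \<in> two_adic_top closure_of powers a" using x by (simp add: in_two_adic_closure_iff)
qed

lemma odd_if_power_eq_one_plus:
  fixes a :: nat
  assumes "a^p = 1 + 2^w * u" "odd u" "1 \<le> w"
  shows "odd a" "a \<noteq> 1"
proof -
  have "a^p \<noteq> 1" "odd (a^p)" using assms odd_pos[of u] by auto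
  then show "odd a" "a \<noteq> 1" by (auto simp: even_power)
qed

lemma one_plus_power_two_power:
  fixes u :: nat
  assumes "odd u" "2 \<le> w"
  shows "\<exists>q. odd q \<and> (1 + 2^w * u)^(2^j) = 1 + 2^(w+j) * q"
proof (induction j)
  case 0
  then show ?case using assms by auto
next
  case (Suc j)
  then obtain q where q: "odd q" "(1 + 2^w * u)^(2^j) = 1 + 2^(w+j) * q" by blast
  obtain n where n: "w + j = Suc n" "1 \<le> n" using assms(2) by (intro that[of "w + j - 1"]) auto
  have "(1 + 2^w * u)^(2^Suc j) = ((1 + 2^w * u)^(2^j))^2"
    by (simp add: power_mult[symmetric] mult.commute)
  also have "\<dots> = 1 + 2^(w + Suc j) * (q + 2^n * q^2)"
    unfolding q(2) n(1) using n(1) by (simp add: power2_eq_square algebra_simps)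
  finally show ?case using q(1) n(2) by (intro exI[of _ "q + 2^n * q^2"]) auto
qed

text \<open>Multiplying by \<open>(a^p)^(2^(m-w)) \<equiv> 1 + 2^m\<close> flips the bit of weight \<open>2^m\<close>,
  so a residue of a power of \<open>a\<close> modulo \<open>2^m\<close> lifts to one modulo \<open>2^(m+1)\<close>.\<close>
lemma power_cong_lift_step:
  fixes a :: nat
  assumes rep: "a^p = 1 + 2^w * u" "odd u" "2 \<le> w" and "w \<le> m"
    and k: "[a^k = x] (mod 2^m)"
  shows "\<exists>k'. [a^k' = x] (mod 2^Suc m)"
proof -
  have "odd a" using odd_if_power_eq_one_plus[OF rep(1,2)] rep(3) by simp
  obtain q where q: "odd q" "(a^p)^(2^(m-w)) = 1 + 2^m * q"
    using one_plus_power_two_power[OF rep(2,3), of "m-w"] rep(1) \<open>w \<le> m\<close> by auto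
  have "(2::int)^m dvd int (a^k) - int x"
    using k by (simp add: cong_int_iff[symmetric] cong_iff_dvd_diff)
  then obtain t where t: "int (a^k) - int x = 2^m * t" by blast
  have lift: "[a^k' = x] (mod 2^Suc m)" if "int (a^k') - int x = 2^m * s" "even s" for k' s
  proof -
    have "(2::int)^Suc m dvd int (a^k') - int x" using that by auto
    then show ?thesis by (metis cong_iff_dvd_diff cong_int_iff of_nat_numeral of_nat_power)
  qed
  show ?thesis
  proof (cases "even t")
    case True
    then show ?thesis using lift[OF t] by blast
  next
    case False
    define k' where "k' = k + p * 2^(m-w)"
    have "a^k' = a^k * (1 + 2^m * q)" using q(2) by (simp add: k'_def power_add power_mult)
    then have "int (a^k') - int x = 2^m * (t + int (a^k) * int q)"
      using t by (simp add: algebra_simps)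
    moreover have "even (t + int (a^k) * int q)" using False \<open>odd a\<close> q(1) by simp
    ultimately show ?thesis using lift by blast
  qed
qed

lemma power_cong_lift:
  fixes a :: nat
  assumes rep: "a^p = 1 + 2^w * u" "odd u" "2 \<le> w"
    and k: "[a^k = x] (mod 2^w)"
  shows "\<exists>k'. [a^k' = x] (mod 2^m)"
proof (cases "m \<le> w")
  case True
  then show ?thesis using k cong_pow2_mono by blast
next
  case False
  have "\<exists>k'. [a^k' = x] (mod 2^(w + d))" for d
  proof (induction d)
    case 0
    then show ?case using k by auto
  next
    case (Suc d)
    then show ?case using power_cong_lift_step[OF rep, of "w + d"] by auto
  qed
  from this[of "m - w"] False show ?thesis by auto
qed

lemma two_adic_closure_powers:
  fixes a :: nat
  assumes rep: "a^p = 1 + 2^w * u" "odd u" "2 \<le> w"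
  shows "two_adic_top closure_of powers a = {x. odd x \<and> (\<exists>k. [a^k = x] (mod 2^w))}"
proof -
  have "odd a" "a \<noteq> 1" using odd_if_power_eq_one_plus[OF rep(1,2)] rep(3) by auto
  then show ?thesis
    using power_cong_lift[OF rep] by (auto simp: in_two_adic_closure_powers_iff)
qed

lemma two_adic_closure_powers_one_plus:
  fixes u :: nat
  assumes "odd u" "2 \<le> v"
  shows "two_adic_top closure_of powers (1 + 2^v * u) = prog 1 v"
proof -
  have pow: "[(1 + 2^v * u)^k = 1] (mod 2^v)" for k
    using cong_pow[OF one_plus_cong_one, of v u k] by simp
  have "odd x \<and> (\<exists>k. [(1 + 2^v * u)^k = x] (mod 2^v)) \<longleftrightarrow> x \<in> prog 1 v" for x
  proof
    assume "odd x \<and> (\<exists>k. [(1 + 2^v * u)^k = x] (mod 2^v))"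
    then obtain k where "odd x" "[(1 + 2^v * u)^k = x] (mod 2^v)" by blast
    then show "x \<in> prog 1 v"
      using pow[of k] odd_pos[of x] by (auto simp: mem_prog_iff Suc_le_eq intro: cong_sym cong_trans)
  next
    assume x: "x \<in> prog 1 v"
    then have "[(1 + 2^v * u)^0 = x] (mod 2^v)" by (simp add: mem_prog_iff cong_sym)
    moreover have "odd x" using x prog_subset_odd[of 1 v] assms(2) by auto
    ultimately show "odd x \<and> (\<exists>k. [(1 + 2^v * u)^k = x] (mod 2^v))" by blast
  qed
  then show ?thesis using two_adic_closure_powers[of _ 1, OF _ assms] by auto
qed

lemma two_adic_closure_powers_of_square:
  fixes b :: nat
  assumes rep: "b^2 = 1 + 2^w * u" "odd u" "2 \<le> w"
  shows "two_adic_top closure_of powers b = {x. odd x \<and> ([x = 1] (mod 2^w) \<or> [x = b] (mod 2^w))}"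
proof -
  have b2: "[b^2 = 1] (mod 2^w)" using rep(1) one_plus_cong_one by simp
  have pow: "[b^k = 1] (mod 2^w) \<or> [b^k = b] (mod 2^w)" for k
  proof -
    have "b^k = (b^2)^(k div 2) * b^(k mod 2)"
      by (simp add: power_add[symmetric] power_mult[symmetric])
    moreover have "[(b^2)^(k div 2) * b^(k mod 2) = 1^(k div 2) * b^(k mod 2)] (mod 2^w)"
      using b2 by (intro cong_mult cong_pow cong_refl)
    moreover have "k mod 2 = 0 \<or> k mod 2 = 1" by auto
    ultimately show ?thesis by auto
  qed
  have "(\<exists>k. [b^k = x] (mod 2^w)) \<longleftrightarrow> [x = 1] (mod 2^w) \<or> [x = b] (mod 2^w)" for x
  proof
    assume "\<exists>k. [b^k = x] (mod 2^w)"
    then obtain k where "[b^k = x] (mod 2^w)" by blast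
    then show "[x = 1] (mod 2^w) \<or> [x = b] (mod 2^w)"
      using pow[of k] cong_sym cong_trans by blast
  next
    assume "[x = 1] (mod 2^w) \<or> [x = b] (mod 2^w)"
    then have "[b^0 = x] (mod 2^w) \<or> [b^1 = x] (mod 2^w)" by (auto intro: cong_sym)
    then show "\<exists>k. [b^k = x] (mod 2^w)" by blast
  qed
  then show ?thesis using two_adic_closure_powers[OF rep] by simp
qed

lemma square_one_plus_if_cong:
  fixes a b :: nat
  assumes rep: "b^2 = 1 + 2^w * u" "odd u" "1 \<le> w" and "[a = b] (mod 2^w)"
  obtains U where "a^2 = 1 + 2^w * U" "odd U"
proof -
  have "[int a = int b] (mod 2^w)" using assms(4) by (simp add: cong_int_iff[symmetric])
  then obtain t where t: "int a = int b + 2^w * t" by (metis cong_iff_lin cong_sym)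
  define U where "U = int u + 2 * int b * t + 2^w * t^2"
  have "int (a^2) = int (b^2) + 2^w * (2 * int b * t + 2^w * t^2)"
    using t by (simp add: power2_eq_square algebra_simps)
  then have U: "int (a^2) = 1 + 2^w * U" unfolding U_def rep(1) by (simp add: algebra_simps)
  have "0 \<le> U"
  proof (rule ccontr)
    assume "\<not> 0 \<le> U"
    then have "2^w * U \<le> 2^w * (-1)" by (intro mult_left_mono) auto
    moreover have "(2::int) \<le> 2^w" using rep(3) self_le_power[of 2 w] by simp
    ultimately show False using U by (smt (verit) of_nat_0_le_iff)
  qed
  then have "int (a^2) = int (1 + 2^w * nat U)" using U by simp
  then have "a^2 = 1 + 2^w * nat U" by (simp only: of_nat_eq_iff)
  moreover have "odd (nat U)" using \<open>0 \<le> U\<close> rep(2,3) by (simp add: U_def even_nat_iff)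
  ultimately show ?thesis by (rule that)
qed

lemma two_adic_closure_powers_eq_if_mem:
  fixes a b :: nat
  assumes "a mod 4 = 3" and rep: "b^2 = 1 + 2^w * u" "odd u" "2 \<le> w"
    and "a \<in> two_adic_top closure_of powers b"
  shows "two_adic_top closure_of powers a = two_adic_top closure_of powers b"
proof -
  have "\<not> [a = 1] (mod 2^w)"
    using cong_pow2_mono[of a 1 w 2] rep(3) assms(1) by (auto simp: cong_def)
  then have ab: "[a = b] (mod 2^w)"
    using assms(5) by (simp add: two_adic_closure_powers_of_square[OF rep])
  obtain U where a2: "a^2 = 1 + 2^w * U" "odd U"
    using square_one_plus_if_cong[OF rep(1,2) _ ab] rep(3) by auto
  have "[x = a] (mod 2^w) \<longleftrightarrow> [x = b] (mod 2^w)" for x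
    using ab cong_sym cong_trans by blast
  then show ?thesis
    unfolding two_adic_closure_powers_of_square[OF a2 rep(3)]
      two_adic_closure_powers_of_square[OF rep] by simp
qed

section \<open>The poset \<open>X2\<close>\<close>

lemma X2_cases:
  assumes "X \<in> X2"
  obtains (prog) v where "2 \<le> v" "X = prog 1 v"
    | (square) b w u where "b mod 4 = 3" "b^2 = 1 + 2^w * u" "odd u" "3 \<le> w"
        "X = two_adic_top closure_of powers b"
proof -
  obtain a where a: "odd a" "a \<noteq> 1" "X = two_adic_top closure_of powers a"
    using assms unfolding X2_def by blast
  then have "1 < a" using odd_pos by fastforce
  have "a mod 4 = 1 \<or> a mod 4 = 3" using a(1) by presburger
  then consider "a mod 4 = 1" | "a mod 4 = 3" by blast
  then show ?thesis
  proof cases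
    case 1
    then have "4 dvd a - 1" using \<open>1 < a\<close> by presburger
    then obtain v u where "a - 1 = 2^v * u" "odd u" "2 \<le> v"
      using pow2_times_odd_decomposition[of "a - 1" 2] \<open>1 < a\<close> by auto
    moreover from this have "a = 1 + 2^v * u" using \<open>1 < a\<close> by simp
    ultimately show ?thesis using prog two_adic_closure_powers_one_plus a(3) by simp
  next
    case 2
    have "1 < a^2" using \<open>1 < a\<close> one_less_power[of a 2] by simp
    have "[a^2 = 1] (mod 8)" using a(1) square_mod_8_eq_1_iff by blast
    then have "2^3 dvd a^2 - 1" using \<open>1 < a^2\<close> by (simp add: cong_altdef_nat)
    then obtain w u where "a^2 - 1 = 2^w * u" "odd u" "3 \<le> w"
      using pow2_times_odd_decomposition[of "a^2 - 1" 3] \<open>1 < a^2\<close> by auto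
    moreover from this have "a^2 = 1 + 2^w * u" using \<open>1 < a^2\<close> by simp
    ultimately show ?thesis using square 2 a(3) by simp
  qed
qed

lemma five_mem_prog_one_iff: "5 \<in> prog 1 n \<longleftrightarrow> n \<le> 2"
proof -
  have "5 \<in> prog 1 n \<longleftrightarrow> 2^n dvd (2::nat)^2" by (simp add: mem_prog_iff cong_altdef_nat)
  also have "\<dots> \<longleftrightarrow> n \<le> 2" by (rule dvd_power_iff_le) simp
  finally show ?thesis .
qed

lemma mod_4_eq_3_not_mem_prog_one: "b mod 4 = 3 \<Longrightarrow> 2 \<le> n \<Longrightarrow> b \<notin> prog 1 n"
  using cong_pow2_mono[of b 1 n 2] by (auto simp: mem_prog_iff cong_def)

lemma prog_one_in_X2: "2 \<le> n \<Longrightarrow> prog 1 n \<in> X2"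
  using two_adic_closure_powers_one_plus[of 1 n] unfolding X2_def
  by (intro CollectI exI[of _ "1 + 2^n"]) auto

lemma mem_two_adic_closure_powers_self: "odd a \<Longrightarrow> a \<in> two_adic_top closure_of powers a"
  using closure_of_subset[of "powers a" two_adic_top]
  by (force simp: topspace_two_adic_top powers_def even_power)

lemma five_not_mem_two_adic_closure_powers:
  assumes "b mod 4 = 3" "b^2 = 1 + 2^w * u" "odd u" "3 \<le> w"
  shows "5 \<notin> two_adic_top closure_of powers b"
  using cong_pow2_mono[of 5 1 w 3] cong_pow2_mono[of 5 b w 2] assms
  by (auto simp: two_adic_closure_powers_of_square[OF assms(2,3)] cong_def)

lemma X2_subset_prog_one_3_cases:
  assumes "X \<in> X2" "X \<subseteq> prog 1 3"
  obtains n where "3 \<le> n" "X = prog 1 n"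
  using assms(1)
proof (cases rule: X2_cases)
  case (prog v)
  then have "v \<noteq> 2" using assms(2) five_mem_prog_one_iff[of 2] five_mem_prog_one_iff[of 3] by auto
  then show ?thesis using prog that[of v] by simp
next
  case (square b w u)
  moreover have "odd b" using square(1) by presburger
  ultimately have "b \<in> prog 1 3" using assms(2) mem_two_adic_closure_powers_self[of b] by auto
  then show ?thesis using mod_4_eq_3_not_mem_prog_one square(1) by auto
qed

lemma X2_subset_prog_one_3: "{X \<in> X2. X \<subseteq> prog 1 3} = {prog 1 n | n. 3 \<le> n}"
proof (intro equalityI subsetI)
  fix X assume "X \<in> {X \<in> X2. X \<subseteq> prog 1 3}"
  then obtain n where "3 \<le> n" "X = prog 1 n" using X2_subset_prog_one_3_cases by blast
  then show "X \<in> {prog 1 n | n. 3 \<le> n}" by blast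
next
  fix X assume "X \<in> {prog 1 n | n. 3 \<le> n}"
  then obtain n where "3 \<le> n" "X = prog 1 n" by blast
  then show "X \<in> {X \<in> X2. X \<subseteq> prog 1 3}" using prog_one_in_X2[of n] prog_antimono[of 3 n 1] by auto
qed

lemma X2_maximal_if_not_subset_prog_one_3:
  assumes X: "X \<in> X2" "\<not> X \<subseteq> prog 1 3" and Y: "Y \<in> X2" "X \<subseteq> Y"
  shows "Y = X"
  using X(1)
proof (cases rule: X2_cases)
  case (prog v)
  then have X2: "X = prog 1 2" using X(2) prog_antimono[of 3 v 1] by (cases "v = 2") auto
  then have "5 \<in> Y" using Y(2) five_mem_prog_one_iff[of 2] by auto
  from Y(1) show ?thesis
  proof (cases rule: X2_cases)
    case (prog v')
    then show ?thesis using \<open>5 \<in> Y\<close> five_mem_prog_one_iff[of v'] X2 by simp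
  next
    case (square b w u)
    then show ?thesis using \<open>5 \<in> Y\<close> five_not_mem_two_adic_closure_powers[of b w u] by simp
  qed
next
  case (square a w u)
  note a = this
  have "odd a" using a(1) by presburger
  then have "a \<in> Y" using Y(2) a(5) mem_two_adic_closure_powers_self by blast
  from Y(1) show ?thesis
  proof (cases rule: X2_cases)
    case (prog v')
    then show ?thesis using \<open>a \<in> Y\<close> mod_4_eq_3_not_mem_prog_one[OF a(1), of v'] by simp
  next
    case (square b w' u')
    then show ?thesis
      using two_adic_closure_powers_eq_if_mem[OF a(1), of b w' u'] \<open>a \<in> Y\<close> a(5) by simp
  qed
qed

lemma X2_maximal_iff_not_subset_prog_one_3:
  assumes "X \<in> X2"
  shows "\<not> (\<exists>Y \<in> X2. Y \<noteq> X \<and> X \<subseteq> Y) \<longleftrightarrow> \<not> X \<subseteq> prog 1 3"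
proof
  assume maximal: "\<not> (\<exists>Y \<in> X2. Y \<noteq> X \<and> X \<subseteq> Y)"
  show "\<not> X \<subseteq> prog 1 3"
  proof
    assume "X \<subseteq> prog 1 3"
    then obtain n where n: "3 \<le> n" "X = prog 1 n" using X2_subset_prog_one_3_cases assms by blast
    have "5 \<in> prog 1 2" "5 \<notin> X" using n five_mem_prog_one_iff by auto
    then have "prog 1 2 \<noteq> X \<and> X \<subseteq> prog 1 2" using n prog_antimono[of 2 n 1] by auto
    then show False using maximal prog_one_in_X2[of 2] by auto
  qed
next
  assume "\<not> X \<subseteq> prog 1 3"
  then show "\<not> (\<exists>Y \<in> X2. Y \<noteq> X \<and> X \<subseteq> Y)"
    using X2_maximal_if_not_subset_prog_one_3[OF assms] by blast
qed

theorem lemma4p9: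
  shows "{X \<in> X2. \<not> X \<subseteq> prog 1 3} =
           {X \<in> X2. \<not> (\<exists>Y \<in> X2. Y \<noteq> X \<and> X \<subseteq> Y)}
       \<and> (\<forall>X \<in> {X \<in> X2. X \<subseteq> prog 1 3}. \<forall>Y \<in> {X \<in> X2. X \<subseteq> prog 1 3}.
             X \<subseteq> Y \<or> Y \<subseteq> X)
       \<and> {X \<in> X2. X \<subseteq> prog 1 3} = {prog 1 n | n. n \<ge> 3}"
proof (intro conjI)
  show "{X \<in> X2. \<not> X \<subseteq> prog 1 3} = {X \<in> X2. \<not> (\<exists>Y \<in> X2. Y \<noteq> X \<and> X \<subseteq> Y)}"
    using X2_maximal_iff_not_subset_prog_one_3 by (intro Collect_cong) blast
  show "\<forall>X \<in> {X \<in> X2. X \<subseteq> prog 1 3}. \<forall>Y \<in> {X \<in> X2. X \<subseteq> prog 1 3}. X \<subseteq> Y \<or> Y \<subseteq> X"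
  proof (intro ballI)
    fix X Y assume "X \<in> {X \<in> X2. X \<subseteq> prog 1 3}" "Y \<in> {X \<in> X2. X \<subseteq> prog 1 3}"
    then obtain n m where "X = prog 1 n" "Y = prog 1 m"
      using X2_subset_prog_one_3_cases by (metis (no_types, lifting) mem_Collect_eq)
    then show "X \<subseteq> Y \<or> Y \<subseteq> X" by (cases "n \<le> m") (simp_all add: prog_antimono)
  qed
  show "{X \<in> X2. X \<subseteq> prog 1 3} = {prog 1 n | n. n \<ge> 3}"
    by (rule X2_subset_prog_one_3)
qed

end
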